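(* Let $H_1$, $G_L$, the Coxeter generators $a_1,\dots,a_5,a_{1'}$ and the labels $1,\dots,6,\overline1,\dots,\overline6$ of $G_L\backslash H_1$ be as in the context, with $H_1$ acting on $G_L\backslash H_1$ by right multiplication. Then: (a) for $1\le k\le 5$, the generator $a_k$ exchanges the coset labeled $k$ with the coset labeled $k+1$, exchanges $\overline{k}$ with $\overline{k+1}$, and fixes the other cosets; (b) the generator $a_{1'}$ exchanges the coset labeled $1$ with the coset labeled $\overline2$, exchanges $\overline1$ with $2$, and fixes the other cosets.
   Context: Let $V=\{(A,B,C,D,E,F,G)^T\in\mathbb{C}^7: E+F+G-A-B-C-D=1\}$. A transposition $(ij)\in S_7$ is identified with the $7\times7$ permutation matrix swapping coordinates $i$ and $j$. Let $X_1\in GL(7,\mathbb{C})$ have rows $e_1$, $-e_3+e_5$, $-e_2+e_5$, $e_4$, $e_5$, $-e_2-e_3+e_5+e_6$, $-e_2-e_3+e_5+e_7$, so that for $\vec x\in V$, $X_1\vec x=(A,E-C,E-B,D,E,1+A+D-G,1+A+D-F)^T$. Let $H_1=\langle(12),(23),(34),(56),(67),X_1\rangle\cong W(D_6)$, with Coxeter generators $a_1=(23),a_2=(34),a_3=X_1,a_4=(56),a_5=(67),a_{1'}=(14)$. Let $G_L=\langle(12),(23),(34),(67),(57)X_1(57)\rangle$ (index 12 in $H_1$). The 12 right cosets of $G_L$ in $H_1$ are labeled as follows: the coset labeled $\sigma$ is $G_L\beta_\sigma$, where $\beta_\sigma\in H_1$ satisfies $\beta_\sigma\vec x=u_\sigma$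 for all $\vec x\in V$, with $u_6=(A,B,C,D,G,F,E)$, $u_5=(A,B,C,D,F,E,G)$, $u_4=(A,B,C,D,E,F,G)$, $u_3=(A,1+A-E,1+A-F,1+A-G,1+A-D,1+A-B,1+A-C)$, $u_2=(A,1+A-E,1+A-F,1+A-G,1+A-C,1+A-B,1+A-D)$, $u_1=(A,1+A-E,1+A-F,1+A-G,1+A-B,1+A-C,1+A-D)$, $u_{\overline6}=(1-A,1-B,1-C,1-D,2-G,2-F,2-E)$, $u_{\overline5}=(1-A,1-B,1-C,1-D,2-F,2-E,2-G)$, $u_{\overline4}=(1-A,1-B,1-C,1-D,2-E,2-F,2-G)$, $u_{\overline3}=(1-A,E-A,F-A,G-A,1+D-A,1+B-A,1+C-A)$, $u_{\overline2}=(1-A,E-A,F-A,G-A,1+C-A,1+B-A,1+D-A)$, $u_{\overline1}=(1-A,E-A,F-A,G-A,1+B-A,1+C-A,1+D-A)$ (all transposed to column vectors). An involution $s\in H_1$ acts by $s(G_L\beta)=G_L\beta s$. *)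

theory Defs
  imports "HOL-Analysis.Analysis"
begin

text \<open>Coordinates of C^7 are indexed by the numeral type 7; the paper's (1-based)
coordinate n (n = 1..7, i.e. A,...,G) is the index idx n.\<close>

type_synonym vec7 = "complex ^ 7"
type_synonym mat7 = "complex ^ 7 ^ 7"

definition idx :: "nat \<Rightarrow> 7" where
  "idx n = of_nat (n - 1)"

definition mk7 :: "complex \<Rightarrow> complex \<Rightarrow> complex \<Rightarrow> complex \<Rightarrow> complex \<Rightarrow> complex \<Rightarrow> complex \<Rightarrow> vec7" where
  "mk7 a b c d e f g = (\<chi> i. if i = idx 1 then a else if i = idx 2 then b else if i = idx 3 then c
      else if i = idx 4 then d else if i = idx 5 then e else if i = idx 6 then f else g)"

definition V :: "vec7 set" where
  "V = {x. x$idx 5 + x$idx 6 + x$idx 7 - x$idx 1 - x$idx 2 - x$idx 3 - x$idx 4 = 1}"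

definition e :: "nat \<Rightarrow> vec7" where
  "e n = axis (idx n) 1"

definition tr :: "nat \<Rightarrow> nat \<Rightarrow> mat7" where
  "tr i j = (\<chi> r c. if c = Transposition.transpose (idx i) (idx j) r then 1 else 0)"

definition X1 :: mat7 where
  "X1 = (\<chi> r. if r = idx 1 then e 1
             else if r = idx 2 then - e 3 + e 5
             else if r = idx 3 then - e 2 + e 5
             else if r = idx 4 then e 4
             else if r = idx 5 then e 5
             else if r = idx 6 then - e 2 - e 3 + e 5 + e 6
             else - e 2 - e 3 + e 5 + e 7)"

inductive_set gen_group :: "mat7 set \<Rightarrow> mat7 set" for S where
  gen_one: "mat 1 \<in> gen_group S"
| gen_base: "s \<in> S \<Longrightarrow> s \<in> gen_group S"
| gen_mult: "a \<in> gen_group S \<Longrightarrow> b \<in> gen_group S \<Longrightarrow> a ** b \<in> gen_group S"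
| gen_inv: "a \<in> gen_group S \<Longrightarrow> matrix_inv a \<in> gen_group S"

definition H1 :: "mat7 set" where
  "H1 = gen_group {tr 1 2, tr 2 3, tr 3 4, tr 5 6, tr 6 7, X1}"

definition GL :: "mat7 set" where
  "GL = gen_group {tr 1 2, tr 2 3, tr 3 4, tr 6 7, tr 5 7 ** X1 ** tr 5 7}"

definition agen :: "nat \<Rightarrow> mat7" where
  "agen k = (if k = 1 then tr 2 3 else if k = 2 then tr 3 4 else if k = 3 then X1
             else if k = 4 then tr 5 6 else tr 6 7)"

definition a1' :: mat7 where
  "a1' = tr 1 4"

datatype lab = Plain nat | Bar nat

definition labels :: "lab set" where
  "labels = Plain ` {1..6} \<union> Bar ` {1..6}"

definition u :: "lab \<Rightarrow> vec7 \<Rightarrow> vec7" where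
  "u \<sigma> x = (let A = x$idx 1; B = x$idx 2; C = x$idx 3; D = x$idx 4;
                 E = x$idx 5; F = x$idx 6; G = x$idx 7 in
    (
     if \<sigma> = Plain 6 then mk7 A B C D G F E else
     if \<sigma> = Plain 5 then mk7 A B C D F E G else
     if \<sigma> = Plain 4 then mk7 A B C D E F G else
     if \<sigma> = Plain 3 then mk7 A (1+A-E) (1+A-F) (1+A-G) (1+A-D) (1+A-B) (1+A-C) else
     if \<sigma> = Plain 2 then mk7 A (1+A-E) (1+A-F) (1+A-G) (1+A-C) (1+A-B) (1+A-D) else
     if \<sigma> = Plain 1 then mk7 A (1+A-E) (1+A-F) (1+A-G) (1+A-B) (1+A-C) (1+A-D) else
     if \<sigma> = Bar 6 then mk7 (1-A) (1-B) (1-C) (1-D) (2-G) (2-F) (2-E) else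
     if \<sigma> = Bar 5 then mk7 (1-A) (1-B) (1-C) (1-D) (2-F) (2-E) (2-G) else
     if \<sigma> = Bar 4 then mk7 (1-A) (1-B) (1-C) (1-D) (2-E) (2-F) (2-G) else
     if \<sigma> = Bar 3 then mk7 (1-A) (E-A) (F-A) (G-A) (1+D-A) (1+B-A) (1+C-A) else
     if \<sigma> = Bar 2 then mk7 (1-A) (E-A) (F-A) (G-A) (1+C-A) (1+B-A) (1+D-A) else
     if \<sigma> = Bar 1 then mk7 (1-A) (E-A) (F-A) (G-A) (1+B-A) (1+C-A) (1+D-A) else
     x))"

text \<open>The right coset labeled sigma: G_L beta_sigma, where beta_sigma \<in> H1 acts on V as u_sigma.
  (beta_sigma is unique, since a linear map is determined by its values on the affine
  hyperplane V, which does not contain 0; so this set is exactly the coset G_L beta_sigma.)\<close>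
definition lcoset :: "lab \<Rightarrow> mat7 set" where
  "lcoset \<sigma> = {g ** \<beta> | g \<beta>. g \<in> GL \<and> \<beta> \<in> H1 \<and> (\<forall>x\<in>V. \<beta> *v x = u \<sigma> x)}"

definition act :: "mat7 \<Rightarrow> mat7 set \<Rightarrow> mat7 set" where
  "act s C = (\<lambda>c. c ** s) ` C"

end

theory Submission
  imports Defs
begin

(* The coset labelled sigma is G_L beta_sigma, where beta_sigma, the unique matrix acting on V as
   u_sigma (V spans C^7), is an explicit word in the generators of H_1. Hence s sends the coset
   sigma to the coset tau as soon as beta_sigma s = h beta_tau for some h in G_L, and every
   transition is certified by such an identity with an explicit word h in the generators of G_L.
   Only the plain labels need certificates. The element w0 = -1 of W(D_6), which acts on V as
   x |-> (1,1,1,1,2,2,2) - x, is central in H_1 and u_(bar sigma) = w0 o u_sigma; so left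
   multiplication by w0 exchanges the cosets sigma and bar sigma and commutes with the right
   action. Finally every generator is an involution, so each exchange needs to be certified in one
   direction only. *)

section \<open>Computing with 7 x 7 matrices\<close>

(* Otherwise simp rewrites tr 1 2 into tr (Suc 0) 2, out of reach of the rules below. *)
declare One_nat_def [simp del]

lemma UNIV_7: "(UNIV :: 7 set) = {0, 1, 2, 3, 4, 5, 6}"
proof -
  have "x \<in> {0, 1, 2, 3, 4, 5, 6}" for x :: 7
  proof (induct x)
    case (of_int z)
    then have "z = 0 \<or> z = 1 \<or> z = 2 \<or> z = 3 \<or> z = 4 \<or> z = 5 \<or> z = 6" by fastforce
    then show ?case by auto
  qed
  then show ?thesis by blast
qed

lemma idx_simps [simp]:
  "idx 1 = 0" "idx 2 = 1" "idx 3 = 2" "idx 4 = 3" "idx 5 = 4" "idx 6 = 5" "idx 7 = 6"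
  by (simp_all add: idx_def)

lemma mk7_nth [simp]:
  "mk7 a b c d p q r $ 0 = a" "mk7 a b c d p q r $ 1 = b" "mk7 a b c d p q r $ 2 = c"
  "mk7 a b c d p q r $ 3 = d" "mk7 a b c d p q r $ 4 = p" "mk7 a b c d p q r $ 5 = q"
  "mk7 a b c d p q r $ 6 = r"
  by (simp_all add: mk7_def)

lemma mk7_eta: "x = mk7 (x$0) (x$1) (x$2) (x$3) (x$4) (x$5) (x$6)"
proof -
  have "x$i = mk7 (x$0) (x$1) (x$2) (x$3) (x$4) (x$5) (x$6) $ i" for i
    using UNIV_7[THEN eqset_imp_iff, of i] by auto
  then show ?thesis unfolding vec_eq_iff by blast
qed

lemma mk7_eq_iff [simp]:
  "mk7 a b c d p q r = mk7 a' b' c' d' p' q' r' \<longleftrightarrow>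
     a = a' \<and> b = b' \<and> c = c' \<and> d = d' \<and> p = p' \<and> q = q' \<and> r = r'"
  by (auto dest: arg_cong[where f = "\<lambda>v. (v$0, v$1, v$2, v$3, v$4, v$5, v$6)"])

lemma sum_UNIV_7: "sum f (UNIV :: 7 set) = f 0 + f 1 + f 2 + f 3 + f 4 + f 5 + f 6"
  unfolding UNIV_7 by (simp add: ac_simps)

lemma matrix_vector_mult_mk7:
  "(M :: mat7) *v mk7 a b c d p q r = mk7
    (M$0$0*a + M$0$1*b + M$0$2*c + M$0$3*d + M$0$4*p + M$0$5*q + M$0$6*r)
    (M$1$0*a + M$1$1*b + M$1$2*c + M$1$3*d + M$1$4*p + M$1$5*q + M$1$6*r)
    (M$2$0*a + M$2$1*b + M$2$2*c + M$2$3*d + M$2$4*p + M$2$5*q + M$2$6*r)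
    (M$3$0*a + M$3$1*b + M$3$2*c + M$3$3*d + M$3$4*p + M$3$5*q + M$3$6*r)
    (M$4$0*a + M$4$1*b + M$4$2*c + M$4$3*d + M$4$4*p + M$4$5*q + M$4$6*r)
    (M$5$0*a + M$5$1*b + M$5$2*c + M$5$3*d + M$5$4*p + M$5$5*q + M$5$6*r)
    (M$6$0*a + M$6$1*b + M$6$2*c + M$6$3*d + M$6$4*p + M$6$5*q + M$6$6*r)"
  by (subst mk7_eta) (simp add: matrix_vector_mult_def sum_UNIV_7)

lemma mat7_eq_iff:
  "(A :: mat7) = B \<longleftrightarrow> (\<forall>a b c d p q r. A *v mk7 a b c d p q r = B *v mk7 a b c d p q r)"
  by (metis matrix_eq mk7_eta)

lemmas generator_entries = matrix_vector_mult_mk7 tr_def e_def axis_def X1_def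
  Transposition.transpose_def

lemma tr_mult_mk7 [simp]:
  "tr 1 2 *v mk7 a b c d p q r = mk7 b a c d p q r"
  "tr 1 4 *v mk7 a b c d p q r = mk7 d b c a p q r"
  "tr 2 3 *v mk7 a b c d p q r = mk7 a c b d p q r"
  "tr 3 4 *v mk7 a b c d p q r = mk7 a b d c p q r"
  "tr 5 6 *v mk7 a b c d p q r = mk7 a b c d q p r"
  "tr 5 7 *v mk7 a b c d p q r = mk7 a b c d r q p"
  "tr 6 7 *v mk7 a b c d p q r = mk7 a b c d p r q"
  by (simp_all add: generator_entries)

lemma X1_mult_mk7 [simp]:
  "X1 *v mk7 a b c d p q r = mk7 a (p - c) (p - b) d p (p + q - b - c) (p + r - b - c)"
  by (simp add: generator_entries algebra_simps)

definition Y :: mat7 where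
  "Y = tr 5 7 ** X1 ** tr 5 7"

lemma Y_mult_mk7 [simp]:
  "Y *v mk7 a b c d p q r = mk7 a (r - c) (r - b) d (r + p - b - c) (r + q - b - c) r"
  by (simp add: Y_def flip: matrix_vector_mul_assoc)

section \<open>Groups generated by invertible matrices\<close>

lemma matrix_inv_left:
  fixes A :: "'a::semiring_1^'n^'n"
  assumes "invertible A"
  shows "matrix_inv A ** A = mat 1"
  using assms unfolding invertible_def matrix_inv_def by (rule someI2_ex) blast

lemma matrix_inv_right:
  fixes A :: "'a::semiring_1^'n^'n"
  assumes "invertible A"
  shows "A ** matrix_inv A = mat 1"
  using assms unfolding invertible_def matrix_inv_def by (rule someI2_ex) blast

lemma invertible_if_involution: "(A :: 'a::semiring_1^'n^'n) ** A = mat 1 \<Longrightarrow> invertible A"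
  unfolding invertible_def by blast

lemma gen_group_invertible:
  assumes gens: "\<And>s. s \<in> S \<Longrightarrow> invertible s" and "a \<in> gen_group S"
  shows "invertible a"
  using \<open>a \<in> gen_group S\<close>
proof induction
  case gen_one
  show ?case by (simp add: invertible_if_involution)
next
  case (gen_base s)
  then show ?case by (rule gens)
next
  case (gen_mult a b)
  then show ?case by (simp add: invertible_mult)
next
  case (gen_inv a)
  show ?case
    unfolding invertible_def[of "matrix_inv a"]
    using matrix_inv_left[OF gen_inv.IH] matrix_inv_right[OF gen_inv.IH] by blast
qed

lemma gen_group_commute:
  assumes gens: "\<And>s. s \<in> S \<Longrightarrow> invertible s"
    and commute: "\<And>s. s \<in> S \<Longrightarrow> J ** s = s ** J"
    and "a \<in> gen_group S"
  shows "J ** a = a ** J"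
  using \<open>a \<in> gen_group S\<close>
proof induction
  case gen_one
  show ?case by simp
next
  case (gen_base s)
  then show ?case by (rule commute)
next
  case (gen_mult a b)
  then show ?case by (metis matrix_mul_assoc)
next
  case (gen_inv a)
  have "invertible a" using gens gen_inv.hyps by (rule gen_group_invertible)
  then have "J ** matrix_inv a = matrix_inv a ** (a ** J) ** matrix_inv a"
    by (simp add: matrix_inv_left matrix_inv_right matrix_mul_assoc)
  also have "\<dots> = matrix_inv a ** J ** (a ** matrix_inv a)"
    by (metis gen_inv.IH matrix_mul_assoc)
  also have "\<dots> = matrix_inv a ** J"
    using \<open>invertible a\<close> by (simp add: matrix_inv_right)
  finally show ?case .
qed

lemma gen_group_right_mult_image:
  assumes gens: "\<And>s. s \<in> S \<Longrightarrow> invertible s" and h: "h \<in> gen_group S"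
  shows "(\<lambda>g. g ** h) ` gen_group S = gen_group S"
proof
  show "(\<lambda>g. g ** h) ` gen_group S \<subseteq> gen_group S"
    using h by (auto intro: gen_group.gen_mult)
  show "gen_group S \<subseteq> (\<lambda>g. g ** h) ` gen_group S"
  proof
    fix g assume g: "g \<in> gen_group S"
    have "g = (g ** matrix_inv h) ** h"
      using gen_group_invertible[OF gens h]
      by (simp add: matrix_inv_left flip: matrix_mul_assoc)
    moreover have "g ** matrix_inv h \<in> gen_group S"
      using g h by (intro gen_group.gen_mult gen_group.gen_inv)
    ultimately show "g \<in> (\<lambda>g. g ** h) ` gen_group S" by blast
  qed
qed

lemma GL_generators [simp]:
  "mat 1 \<in> GL" "tr 1 2 \<in> GL" "tr 2 3 \<in> GL" "tr 3 4 \<in> GL" "tr 6 7 \<in> GL" "Y \<in> GL"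
  unfolding GL_def Y_def by (auto intro: gen_group.intros)

lemma GL_mult [simp]: "a \<in> GL \<Longrightarrow> b \<in> GL \<Longrightarrow> a ** b \<in> GL"
  unfolding GL_def by (rule gen_group.gen_mult)

lemma H1_generators [simp]:
  "mat 1 \<in> H1" "tr 1 2 \<in> H1" "tr 2 3 \<in> H1" "tr 3 4 \<in> H1" "tr 5 6 \<in> H1" "tr 6 7 \<in> H1"
  "X1 \<in> H1"
  unfolding H1_def by (auto intro: gen_group.intros)

lemma H1_mult [simp]: "a \<in> H1 \<Longrightarrow> b \<in> H1 \<Longrightarrow> a ** b \<in> H1"
  unfolding H1_def by (rule gen_group.gen_mult)

lemma GL_generators_involutions:
  "s \<in> {tr 1 2, tr 2 3, tr 3 4, tr 6 7, Y} \<Longrightarrow> s ** s = mat 1"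
  by (auto simp: mat7_eq_iff simp flip: matrix_vector_mul_assoc)

lemma right_mult_GL_image: "h \<in> GL \<Longrightarrow> (\<lambda>g. g ** h) ` GL = GL"
  unfolding GL_def Y_def[symmetric]
  by (rule gen_group_right_mult_image)
    (auto intro: invertible_if_involution GL_generators_involutions)

lemma act_GL_rcoset:
  assumes "\<beta> ** s = h ** \<beta>'" and "h \<in> GL"
  shows "act s ((\<lambda>g. g ** \<beta>) ` GL) = (\<lambda>g. g ** \<beta>') ` GL"
proof -
  have "act s ((\<lambda>g. g ** \<beta>) ` GL) = (\<lambda>g. g ** \<beta>') ` (\<lambda>g. g ** h) ` GL"
    by (simp add: act_def image_image assms(1) flip: matrix_mul_assoc)
  then show ?thesis by (simp add: right_mult_GL_image assms(2))
qed

section \<open>Coset representatives\<close>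

lemma mat7_eq_if_eq_on_V:
  assumes "\<And>x. x \<in> V \<Longrightarrow> (M :: mat7) *v x = N *v x"
  shows "M = N"
  unfolding matrix_eq
proof
  fix x :: vec7
  define c where "c = 1 - (x$4 + x$5 + x$6 - x$0 - x$1 - x$2 - x$3)"
  have "e 5 \<in> V" and "x + c *s e 5 \<in> V"
    by (simp_all add: V_def e_def axis_def c_def)
  then have "M *v e 5 = N *v e 5" and "M *v (x + c *s e 5) = N *v (x + c *s e 5)"
    by (simp_all add: assms)
  then show "M *v x = N *v x"
    by (simp add: matrix_vector_right_distrib vector_scalar_commute)
qed

lemma eq_on_V_if_eq_on_mk7:
  assumes "\<And>a b c d p q. M *v mk7 a b c d p q (1 + a + b + c + d - p - q)
                          = f (mk7 a b c d p q (1 + a + b + c + d - p - q))"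
  shows "\<forall>x\<in>V. M *v x = f x"
proof
  fix x assume "x \<in> V"
  then have "x$6 = 1 + x$0 + x$1 + x$2 + x$3 - x$4 - x$5"
    by (simp add: V_def algebra_simps)
  then have "x = mk7 (x$0) (x$1) (x$2) (x$3) (x$4) (x$5) (1 + x$0 + x$1 + x$2 + x$3 - x$4 - x$5)"
    by (metis mk7_eta)
  then show "M *v x = f x" by (metis assms)
qed

lemma lcoset_eq_GL_rcoset:
  assumes "\<beta> \<in> H1" and "\<forall>x\<in>V. \<beta> *v x = u \<sigma> x"
  shows "lcoset \<sigma> = (\<lambda>g. g ** \<beta>) ` GL"
proof -
  have "\<beta>' = \<beta>" if "\<forall>x\<in>V. \<beta>' *v x = u \<sigma> x" for \<beta>'
    using that assms(2) by (intro mat7_eq_if_eq_on_V) simp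
  then show ?thesis
    using assms unfolding lcoset_def by blast
qed

(* Shortest words acting on V as u (Plain k); for k outside 1..6 both beta k and u (Plain k)
   are the identity. *)
definition beta1 :: mat7 where
  "beta1 = X1 ** tr 3 4 ** tr 2 3 ** tr 5 6 ** tr 6 7 ** X1 ** tr 3 4 ** tr 5 6 ** X1"

definition beta :: "nat \<Rightarrow> mat7" where
  "beta k = (if k = 1 then beta1 else if k = 2 then tr 5 6 ** beta1
    else if k = 3 then tr 5 6 ** tr 6 7 ** beta1 else if k = 5 then tr 5 6
    else if k = 6 then tr 5 6 ** tr 6 7 ** tr 5 6 else mat 1)"

(* The longest element of W(D_6); it acts on V as u (Bar 4). *)
definition w0 :: mat7 where
  "w0 = tr 1 2 ** tr 2 3 ** tr 5 6 ** tr 6 7 ** tr 5 6 ** X1 ** tr 1 2 ** tr 3 4 ** tr 2 3 **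
    tr 5 6 ** tr 6 7 ** X1 ** tr 1 2 ** tr 3 4 ** tr 5 6 ** tr 6 7 ** X1 ** tr 1 2 ** tr 3 4 **
    tr 5 6 ** X1 ** tr 3 4"

lemmas word_simps = mat7_eq_iff beta_def beta1_def w0_def matrix_vector_mul_assoc[symmetric]

lemma beta_in_H1: "beta k \<in> H1"
  by (simp add: beta_def beta1_def)

lemma w0_in_H1: "w0 \<in> H1"
  by (simp add: w0_def)

lemma beta_on_V: "\<forall>x\<in>V. beta k *v x = u (Plain k) x"
  by (rule eq_on_V_if_eq_on_mk7) (simp add: word_simps u_def Let_def algebra_simps)

lemma w0_beta_on_V: "k \<in> {1..6} \<Longrightarrow> \<forall>x\<in>V. (w0 ** beta k) *v x = u (Bar k) x"
  by (rule eq_on_V_if_eq_on_mk7) (auto simp: word_simps u_def Let_def algebra_simps)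

lemma lcoset_Plain: "lcoset (Plain k) = (\<lambda>g. g ** beta k) ` GL"
  using beta_in_H1 beta_on_V by (rule lcoset_eq_GL_rcoset)

lemma lcoset_Bar: "k \<in> {1..6} \<Longrightarrow> lcoset (Bar k) = (\<lambda>g. g ** (w0 ** beta k)) ` GL"
  using beta_in_H1 w0_in_H1 w0_beta_on_V by (intro lcoset_eq_GL_rcoset) simp_all

lemma w0_involution: "w0 ** w0 = mat 1"
  by (simp add: word_simps)

lemma w0_commutes_GL: "g \<in> GL \<Longrightarrow> w0 ** g = g ** w0"
  unfolding GL_def Y_def[symmetric]
proof (rule gen_group_commute)
  show "invertible s" if "s \<in> {tr 1 2, tr 2 3, tr 3 4, tr 6 7, Y}" for s
    using that by (intro invertible_if_involution GL_generators_involutions)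
  show "w0 ** s = s ** w0" if "s \<in> {tr 1 2, tr 2 3, tr 3 4, tr 6 7, Y}" for s
    using that by (auto simp: word_simps)
qed

fun bar :: "lab \<Rightarrow> lab" where
  "bar (Plain k) = Bar k"
| "bar (Bar k) = Plain k"

lemma w0_mult_image_involution: "(\<lambda>c. w0 ** c) ` (\<lambda>c. w0 ** c) ` C = C"
  by (simp add: image_image matrix_mul_assoc w0_involution)

lemma lcoset_bar:
  assumes "\<sigma> \<in> labels"
  shows "lcoset (bar \<sigma>) = (\<lambda>c. w0 ** c) ` lcoset \<sigma>"
proof -
  have Bar: "lcoset (Bar k) = (\<lambda>c. w0 ** c) ` lcoset (Plain k)" if "k \<in> {1..6}" for k
  proof -
    have "lcoset (Bar k) = (\<lambda>g. w0 ** g ** beta k) ` GL"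
      using that by (auto simp: lcoset_Bar matrix_mul_assoc w0_commutes_GL)
    then show ?thesis
      by (simp add: lcoset_Plain image_image matrix_mul_assoc)
  qed
  from assms obtain k where k: "k \<in> {1..6}" and "\<sigma> = Plain k \<or> \<sigma> = Bar k"
    unfolding labels_def by blast
  then show ?thesis
    by (metis Bar[OF k] bar.simps w0_mult_image_involution)
qed

section \<open>The action on labelled cosets\<close>

lemma act_act: "act s (act t C) = act (t ** s) C"
  by (simp add: act_def image_image matrix_mul_assoc)

lemma act_mat_1: "act (mat 1) C = C"
  by (simp add: act_def)

lemma act_involution: "s ** s = mat 1 \<Longrightarrow> act s C = D \<Longrightarrow> act s D = C"
  by (metis act_act act_mat_1)

lemma act_left_mult_image: "act s ((\<lambda>c. J ** c) ` C) = (\<lambda>c. J ** c) ` act s C"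
  by (simp add: act_def image_image matrix_mul_assoc)

lemma act_lcoset_bar:
  assumes "\<sigma> \<in> labels" "\<tau> \<in> labels" and "act s (lcoset \<sigma>) = lcoset \<tau>"
  shows "act s (lcoset (bar \<sigma>)) = lcoset (bar \<tau>)"
  using assms by (simp add: lcoset_bar act_left_mult_image)

lemma act_lcoset_double_transposition:
  assumes invol: "s ** s = mat 1"
    and ij: "i \<in> {1..6}" "j \<in> {1..6}" and \<tau>: "\<tau> \<in> {Plain j, Bar j}"
    and swap: "act s (lcoset (Plain i)) = lcoset \<tau>"
    and fixed: "\<forall>l\<in>{1..6} - {i, j}. act s (lcoset (Plain l)) = lcoset (Plain l)"
  shows "act s (lcoset (Plain i)) = lcoset \<tau> \<and> act s (lcoset \<tau>) = lcoset (Plain i) \<and>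
    act s (lcoset (Bar i)) = lcoset (bar \<tau>) \<and> act s (lcoset (bar \<tau>)) = lcoset (Bar i) \<and>
    (\<forall>\<sigma>\<in>labels - {Plain i, \<tau>, Bar i, bar \<tau>}. act s (lcoset \<sigma>) = lcoset \<sigma>)"
proof -
  have labels: "Plain i \<in> labels" "\<tau> \<in> labels"
    using ij \<tau> by (auto simp: labels_def)
  have bar_swap: "act s (lcoset (Bar i)) = lcoset (bar \<tau>)"
    using act_lcoset_bar[OF labels swap] by simp
  have "act s (lcoset \<sigma>) = lcoset \<sigma>" if other: "\<sigma> \<in> labels - {Plain i, \<tau>, Bar i, bar \<tau>}" for \<sigma>
  proof -
    obtain l where "l \<in> {1..6}" and \<sigma>: "\<sigma> = Plain l \<or> \<sigma> = Bar l"
      using other unfolding labels_def by blast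
    moreover have "l \<notin> {i, j}"
      using other \<sigma> \<tau> by auto
    ultimately have "act s (lcoset (Plain l)) = lcoset (Plain l)" and "Plain l \<in> labels"
      using fixed by (simp_all add: labels_def)
    then show ?thesis
      using \<sigma> act_lcoset_bar[of "Plain l" "Plain l" s] by auto
  qed
  then show ?thesis
    using swap bar_swap act_involution[OF invol] by blast
qed

lemma act_lcoset_Plain_by_witness:
  "beta i ** s = h ** beta j \<Longrightarrow> h \<in> GL \<Longrightarrow> act s (lcoset (Plain i)) = lcoset (Plain j)"
  unfolding lcoset_Plain by (rule act_GL_rcoset)

(* The left factors on the right-hand sides are words in the generators of G_L, found by a
   breadth-first search through G_L. *)
lemma beta_mult_agen:
  "beta 1 ** agen 1 = mat 1 ** beta 2"
  "beta 3 ** agen 1 = tr 6 7 ** beta 3"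
  "beta 4 ** agen 1 = tr 2 3 ** beta 4"
  "beta 5 ** agen 1 = tr 2 3 ** beta 5"
  "beta 6 ** agen 1 = tr 2 3 ** beta 6"
  "beta 2 ** agen 2 = mat 1 ** beta 3"
  "beta 1 ** agen 2 = tr 6 7 ** beta 1"
  "beta 4 ** agen 2 = tr 3 4 ** beta 4"
  "beta 5 ** agen 2 = tr 3 4 ** beta 5"
  "beta 6 ** agen 2 = tr 3 4 ** beta 6"
  "beta 3 ** agen 3 = (tr 3 4 ** tr 6 7 ** Y ** tr 3 4 ** tr 2 3 ** tr 6 7 ** Y ** tr 3 4) ** beta 4"
  "beta 1 ** agen 3 = (tr 2 3 ** tr 3 4 ** Y ** tr 3 4 ** tr 2 3) ** beta 1"
  "beta 2 ** agen 3 = (tr 2 3 ** tr 3 4 ** Y ** tr 3 4 ** tr 2 3) ** beta 2"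
  "beta 5 ** agen 3 = (tr 6 7 ** Y ** tr 6 7) ** beta 5"
  "beta 6 ** agen 3 = Y ** beta 6"
  "beta 4 ** agen 4 = mat 1 ** beta 5"
  "beta 1 ** agen 4 = tr 2 3 ** beta 1"
  "beta 2 ** agen 4 = tr 2 3 ** beta 2"
  "beta 3 ** agen 4 = tr 2 3 ** beta 3"
  "beta 6 ** agen 4 = tr 6 7 ** beta 6"
  "beta 5 ** agen 5 = tr 6 7 ** beta 6"
  "beta 1 ** agen 5 = tr 3 4 ** beta 1"
  "beta 2 ** agen 5 = tr 3 4 ** beta 2"
  "beta 3 ** agen 5 = tr 3 4 ** beta 3"
  "beta 4 ** agen 5 = tr 6 7 ** beta 4"
  by (simp_all add: word_simps agen_def)

lemma beta_mult_a1':
  "beta 1 ** a1' = (tr 1 2 ** tr 2 3 ** Y ** tr 1 2 ** tr 3 4 ** tr 2 3 ** Y ** tr 3 4) ** (w0 ** beta 2)"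
  "beta 3 ** a1' = (Y ** tr 1 2 ** tr 3 4 ** tr 6 7 ** Y ** tr 1 2 ** tr 3 4 ** tr 6 7 ** Y) ** beta 3"
  "beta 4 ** a1' = a1' ** beta 4"
  "beta 5 ** a1' = a1' ** beta 5"
  "beta 6 ** a1' = a1' ** beta 6"
  by (simp_all add: word_simps a1'_def)

lemma a1'_in_GL: "a1' \<in> GL"
proof -
  have "tr 1 2 ** tr 2 3 ** tr 3 4 ** tr 2 3 ** tr 1 2 \<in> GL"
    by simp
  moreover have "tr 1 2 ** tr 2 3 ** tr 3 4 ** tr 2 3 ** tr 1 2 = a1'"
    by (simp add: word_simps a1'_def)
  ultimately show ?thesis by simp
qed

lemma agen_involution: "agen k ** agen k = mat 1"
  by (simp add: word_simps agen_def)

lemma a1'_involution: "a1' ** a1' = mat 1"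
  by (simp add: word_simps a1'_def)

lemma act_agen_lcoset_Plain:
  assumes "k \<in> {1..5}"
  shows "act (agen k) (lcoset (Plain k)) = lcoset (Plain (k + 1))"
    and "\<forall>l\<in>{1..6} - {k, k + 1}. act (agen k) (lcoset (Plain l)) = lcoset (Plain l)"
proof -
  have k: "k \<in> {1, 2, 3, 4, 5}" using assms by auto
  then show "act (agen k) (lcoset (Plain k)) = lcoset (Plain (k + 1))"
    by (auto simp: beta_mult_agen[THEN act_lcoset_Plain_by_witness])
  have "{1..6} - {k, k + 1} \<subseteq> {1, 2, 3, 4, 5, 6} - {k, k + 1}" by auto
  with k show "\<forall>l\<in>{1..6} - {k, k + 1}. act (agen k) (lcoset (Plain l)) = lcoset (Plain l)"
    by (auto simp: beta_mult_agen[THEN act_lcoset_Plain_by_witness])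
qed

lemma act_a1'_lcoset_Plain:
  shows "act a1' (lcoset (Plain 1)) = lcoset (Bar 2)"
    and "\<forall>l\<in>{1..6} - {1, 2}. act a1' (lcoset (Plain l)) = lcoset (Plain l)"
proof -
  show "act a1' (lcoset (Plain 1)) = lcoset (Bar 2)"
    using act_GL_rcoset[OF beta_mult_a1'(1)] by (simp add: lcoset_Plain lcoset_Bar)
  have "{1..6} - {1, 2} = {3, 4, 5, 6 :: nat}" by auto
  then show "\<forall>l\<in>{1..6} - {1, 2}. act a1' (lcoset (Plain l)) = lcoset (Plain l)"
    by (simp add: beta_mult_a1'(2-5)[THEN act_lcoset_Plain_by_witness] a1'_in_GL)
qed

theorem proposition4p5:
  shows "(\<forall>k\<in>{1..5::nat}.
            act (agen k) (lcoset (Plain k)) = lcoset (Plain (k+1)) \<and>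
            act (agen k) (lcoset (Plain (k+1))) = lcoset (Plain k) \<and>
            act (agen k) (lcoset (Bar k)) = lcoset (Bar (k+1)) \<and>
            act (agen k) (lcoset (Bar (k+1))) = lcoset (Bar k) \<and>
            (\<forall>\<sigma>\<in>labels - {Plain k, Plain (k+1), Bar k, Bar (k+1)}.
                act (agen k) (lcoset \<sigma>) = lcoset \<sigma>))
       \<and> act a1' (lcoset (Plain 1)) = lcoset (Bar 2)
       \<and> act a1' (lcoset (Bar 2)) = lcoset (Plain 1)
       \<and> act a1' (lcoset (Bar 1)) = lcoset (Plain 2)
       \<and> act a1' (lcoset (Plain 2)) = lcoset (Bar 1)
       \<and> (\<forall>\<sigma>\<in>labels - {Plain 1, Bar 2, Bar 1, Plain 2}. act a1' (lcoset \<sigma>) = lcoset \<sigma>)"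
proof (rule conjI[OF ballI], goal_cases)
  case (1 k)
  then have "k \<in> {1..6}" "k + 1 \<in> {1..6}" "Plain (k + 1) \<in> {Plain (k + 1), Bar (k + 1)}"
    by auto
  from act_lcoset_double_transposition[OF agen_involution this act_agen_lcoset_Plain[OF 1]]
  show ?case unfolding bar.simps .
next
  case 2
  have "1 \<in> {1..6::nat}" "2 \<in> {1..6::nat}" "Bar 2 \<in> {Plain 2, Bar 2}"
    by auto
  from act_lcoset_double_transposition[OF a1'_involution this act_a1'_lcoset_Plain]
  show ?case unfolding bar.simps .
qed

end
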